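(* For $i\ge1$ let $u^i:[0,1]\to{\bf Q}_2(\mathbb{R})$ be the pluri-diamond with $u^i(1/3)=2[[0]]$ which is a diamond exactly above the closed middle-third intervals removed in the first $i$ steps of the construction of the Cantor ternary set (i.e. above $[1/3,2/3]$ for $i=1$; above $[1/3,2/3],[1/9,2/9],[7/9,8/9]$ for $i=2$; etc.) and is of the form $x\mapsto2[[x+p]]$ on each remaining interval. Write $u^i=[[u^i_{\min}]]+[[u^i_{\max}]]$ with $u^i_{\min}\le u^i_{\max}$. Suppose that along a subsequence $u^i_{\min}\to u_{\min}$ and $u^i_{\max}\to u_{\max}$ uniformly on $[0,1]$, and set $u=[[u_{\min}]]+[[u_{\max}]]$. Then $u$ is a Dirichlet $4$-quasiminimizer on $(0,1)$ (for every interval $(a,b)\subset(0,1)$, $\mathrm{Dir}(u;(a,b))\le4\,\mathrm{Dir}(v;(a,b))$ with $v$ Dirichlet minimizing on $(a,b)$ with $v(a)=u(a)$, $v(b)=u(b)$), and the branch set of $u$ is the Cantor ternary set $T$.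
   Context: ${\bf Q}_2(\mathbb{R})$ is the space of unordered pairs $[[x]]+[[y]]$ of reals with metric $\mathcal{G}([[x_1]]+[[x_2]],[[y_1]]+[[y_2]])=\min_\sigma(\sum_i|x_i-y_{\sigma(i)}|^2)^{1/2}$. For Lipschitz $u=[[u_1]]+[[u_2]]$ with $u_1\le u_2$, $\mathrm{Dir}(u;I)=\int_I(u_1')^2+(u_2')^2dx$; Dirichlet minimizing with given endpoint values means minimizing $\mathrm{Dir}$ among (Sobolev) ${\bf Q}_2(\mathbb{R})$-valued maps with those endpoint values. A diamond above $[a,b]$ is a map whose graph is the parallelogram with vertices $(a,h),((a+b)/2,h),((a+b)/2,h+(b-a)/2),(b,h+(b-a)/2)$ for some $h\in\mathbb{R}$. A pluri-diamond is a continuous $u:[0,1]\to{\bf Q}_2(\mathbb{R})$ admitting a partition of $[0,1]$ into intervals on each of which $u$ is a diamond or of the form $x\mapsto2[[x+p]]$, $p\in\mathbb{R}$. For a continuous multiple-valued $u$, let $\sigma(x)=\mathrm{card}(\mathrm{spt}\,u(x))$; the branch set of $u$ is the set of points where $\sigma$ is discontinuous. $T=\bigcap_iT_i$ with $T_1=[0,1/3]\cup[2/3,1]$, $T_2=[0,1/9]\cup[2/9,1/3]\cup[2/3,7/9]\cup[8/9,1]$, etc. *)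

theory Defs
  imports "HOL-Analysis.Analysis"
begin

text \<open>A map into Q_2(R) is represented by its ordered branches f1 \<le> f2,
  i.e. u = [[f1]] + [[f2]].\<close>

text \<open>Diamond above [a,b]: graph is the parallelogram with vertices
  (a,h), (m,h), (m,h+(b-a)/2), (b,h+(b-a)/2), m = (a+b)/2.\<close>
definition is_diamond :: "(real \<Rightarrow> real) \<Rightarrow> (real \<Rightarrow> real) \<Rightarrow> real \<Rightarrow> real \<Rightarrow> bool" where
  "is_diamond f1 f2 a b \<longleftrightarrow> a < b \<and> (\<exists>h. \<forall>x\<in>{a..b}.
      f1 x = (if x \<le> (a+b)/2 then h else h + (x - (a+b)/2)) \<and>
      f2 x = (if x \<le> (a+b)/2 then h + (x - a) else h + (b-a)/2))"

definition is_double_line :: "(real \<Rightarrow> real) \<Rightarrow> (real \<Rightarrow> real) \<Rightarrow> real \<Rightarrow> real \<Rightarrow> bool" where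
  "is_double_line f1 f2 a b \<longleftrightarrow> (\<exists>p. \<forall>x\<in>{a..b}. f1 x = x + p \<and> f2 x = x + p)"

definition pluri_diamond :: "(real \<Rightarrow> real) \<Rightarrow> (real \<Rightarrow> real) \<Rightarrow> bool" where
  "pluri_diamond f1 f2 \<longleftrightarrow>
     (\<forall>x\<in>{0..1}. f1 x \<le> f2 x) \<and> continuous_on {0..1} f1 \<and> continuous_on {0..1} f2 \<and>
     (\<exists>ts::real list. length ts \<ge> 2 \<and> sorted_wrt (<) ts \<and> hd ts = 0 \<and> last ts = 1 \<and>
        (\<forall>k. Suc k < length ts \<longrightarrow>
           is_diamond f1 f2 (ts!k) (ts!Suc k) \<or> is_double_line f1 f2 (ts!k) (ts!Suc k)))"

fun cantor_intervals :: "nat \<Rightarrow> (real \<times> real) set" where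
  "cantor_intervals 0 = {(0,1)}"
| "cantor_intervals (Suc n) =
     (\<Union>(a,b)\<in>cantor_intervals n. {(a, a + (b-a)/3), (b - (b-a)/3, b)})"

definition cantor_step :: "nat \<Rightarrow> real set" where
  "cantor_step n = (\<Union>(a,b)\<in>cantor_intervals n. {a..b})"

definition cantor_set :: "real set" where
  "cantor_set = (\<Inter>n. cantor_step n)"

definition removed_intervals :: "nat \<Rightarrow> (real \<times> real) set" where
  "removed_intervals i =
     (\<Union>n<i. (\<lambda>(a,b). (a + (b-a)/3, b - (b-a)/3)) ` cantor_intervals n)"

text \<open>Dirichlet energy on (a,b) of [[f1]]+[[f2]] (f1 \<le> f2), via the a.e. derivatives.\<close>
definition Dir :: "(real \<Rightarrow> real) \<Rightarrow> (real \<Rightarrow> real) \<Rightarrow> real \<Rightarrow> real \<Rightarrow> ennreal" where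
  "Dir f1 f2 a b = (\<integral>\<^sup>+ x\<in>{a<..<b}. ennreal ((deriv f1 x)\<^sup>2 + (deriv f2 x)\<^sup>2) \<partial>lborel)"

text \<open>W^{1,2}(a,b) real functions: absolutely continuous with square integrable derivative.\<close>
definition sobolev12 :: "real \<Rightarrow> real \<Rightarrow> (real \<Rightarrow> real) \<Rightarrow> bool" where
  "sobolev12 a b f \<longleftrightarrow> (\<exists>g. g absolutely_integrable_on {a..b} \<and>
      (\<lambda>x. (g x)\<^sup>2) integrable_on {a..b} \<and>
      (\<forall>x\<in>{a..b}. f x = f a + integral {a..x} g))"

definition admissible :: "real \<Rightarrow> real \<Rightarrow> real \<Rightarrow> real \<Rightarrow> real \<Rightarrow> real \<Rightarrow>
    (real \<Rightarrow> real) \<Rightarrow> (real \<Rightarrow> real) \<Rightarrow> bool" where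
  "admissible a b p1 p2 q1 q2 v1 v2 \<longleftrightarrow>
     sobolev12 a b v1 \<and> sobolev12 a b v2 \<and> (\<forall>x\<in>{a..b}. v1 x \<le> v2 x) \<and>
     v1 a = p1 \<and> v2 a = p2 \<and> v1 b = q1 \<and> v2 b = q2"

definition dir_minimizing :: "real \<Rightarrow> real \<Rightarrow> real \<Rightarrow> real \<Rightarrow> real \<Rightarrow> real \<Rightarrow>
    (real \<Rightarrow> real) \<Rightarrow> (real \<Rightarrow> real) \<Rightarrow> bool" where
  "dir_minimizing a b p1 p2 q1 q2 v1 v2 \<longleftrightarrow>
     admissible a b p1 p2 q1 q2 v1 v2 \<and>
     (\<forall>w1 w2. admissible a b p1 p2 q1 q2 w1 w2 \<longrightarrow> Dir v1 v2 a b \<le> Dir w1 w2 a b)"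

definition dir_quasiminimizer :: "real \<Rightarrow> (real \<Rightarrow> real) \<Rightarrow> (real \<Rightarrow> real) \<Rightarrow> bool" where
  "dir_quasiminimizer K f1 f2 \<longleftrightarrow>
     (\<forall>a b. 0 \<le> a \<and> a < b \<and> b \<le> 1 \<longrightarrow>
        (\<forall>v1 v2. dir_minimizing a b (f1 a) (f2 a) (f1 b) (f2 b) v1 v2 \<longrightarrow>
           Dir f1 f2 a b \<le> ennreal K * Dir v1 v2 a b))"

definition branch_set :: "(real \<Rightarrow> real) \<Rightarrow> (real \<Rightarrow> real) \<Rightarrow> real set" where
  "branch_set f1 f2 = {x\<in>{0..1}.
     \<not> continuous (at x within {0..1}) (\<lambda>y. real (card {f1 y, f2 y}))}"

end

theory Submission
  imports Defs
begin

(* Each u^i is built from diamonds over the removed middle thirds and doubled lines of slope 1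
   over the remaining Cantor intervals, so its trace u1 + u2 - x is nondecreasing.  A diamond over
   a fixed removed interval is present in all u^i of large index and therefore in the limit, while
   at a point of T the two branches of u^i agree for all large i.  So the limit u has two distinct
   values on every removed interval and a single one on T, and T is its branch set because removed
   intervals accumulate at every point of T.
   For the energy: off the null set formed by T and the corners of the diamonds, u has slopes
   (0,1) or (1,0), so Dir(u;(a,b)) <= b - a.  A competitor v with the same endpoint values has
   v1 + v2 rising by at least b - a, and g^2 >= g - 1/4 gives Dir(v;(a,b)) >= (b - a)/2.
   Since Dir is defined through pointwise derivatives, computing the energy of a Sobolev
   competitor needs Lebesgue's differentiation theorem for indefinite integrals, which is derived
   here from the Henstock lemma and the Vitali covering theorem. *)

section \<open>Lebesgue differentiation of indefinite integrals\<close>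

lemma lmeasurable_superset_of_almost_cover:
  fixes E :: "'a::euclidean_space set" and B :: "'i \<Rightarrow> 'a set"
  assumes "countable C" and "\<And>i. i \<in> C \<Longrightarrow> B i \<in> lmeasurable"
    and "negligible (E - (\<Union>i\<in>C. B i))"
    and "\<And>D. D \<subseteq> C \<Longrightarrow> finite D \<Longrightarrow> measure lebesgue (\<Union>i\<in>D. B i) \<le> e"
  shows "\<exists>T. E \<subseteq> T \<and> T \<in> lmeasurable \<and> measure lebesgue T \<le> e"
proof -
  let ?U = "\<Union>i\<in>C. B i"
  have U: "?U \<in> lmeasurable" "measure lebesgue ?U \<le> e"
    using fmeasurable_UN_bound[OF assms(1,2,4)] measure_UN_bound[OF assms(1,2,4)] by auto
  have N: "E - ?U \<in> lmeasurable" "measure lebesgue (E - ?U) = 0"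
    using assms(3) by (auto simp: negligible_iff_null_sets fmeasurableI_null_sets negligible_imp_measure0)
  have "measure lebesgue ((E - ?U) \<union> ?U) \<le> measure lebesgue (E - ?U) + measure lebesgue ?U"
    by (rule measure_Un_le) (use N U fmeasurableD in auto)
  moreover have "(E - ?U) \<union> ?U \<in> lmeasurable"
    using N(1) U(1) by (rule fmeasurable.Un)
  ultimately show ?thesis
    using N(2) U(2) by (intro exI[of _ "(E - ?U) \<union> ?U"]) auto
qed

lemma Henstock_lemma_family:
  fixes g :: "'a::euclidean_space \<Rightarrow> 'b::real_normed_vector"
  assumes Henstock: "\<And>p. p tagged_partial_division_of cbox a b \<Longrightarrow> \<gamma> fine p \<Longrightarrow>
      (\<Sum>(x,k)\<in>p. norm (measure lborel k *\<^sub>R g x - integral k g)) < \<epsilon>"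
    and D: "finite D" "pairwise (\<lambda>i j. disjnt (K i) (K j)) D"
    and J: "\<And>i. i \<in> D \<Longrightarrow>
      tag i \<in> J i \<and> J i \<subseteq> K i \<and> J i \<subseteq> cbox a b \<and> J i \<subseteq> \<gamma> (tag i) \<and> (\<exists>u v. J i = cbox u v)"
  shows "(\<Sum>i\<in>D. norm (measure lborel (J i) *\<^sub>R g (tag i) - integral (J i) g)) < \<epsilon>"
proof -
  define p where "p = (\<lambda>i. (tag i, J i)) ` D"
  have disj: "J i \<inter> J j = {}" if "i \<in> D" "j \<in> D" "i \<noteq> j" for i j
    using D(2) J[OF that(1)] J[OF that(2)] that unfolding pairwise_def disjnt_def by blast
  have inj: "inj_on (\<lambda>i. (tag i, J i)) D"
  proof (rule inj_onI)
    fix i j assume "i \<in> D" "j \<in> D" "(tag i, J i) = (tag j, J j)"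
    then show "i = j"
      using J[of i] disj[of i j] by auto
  qed
  have "interior (J i) \<inter> interior (J j) = {}" if "i \<in> D" "j \<in> D" "i \<noteq> j" for i j
    using disj[OF that] interior_subset[of "J i"] interior_subset[of "J j"] by blast
  then have "p tagged_partial_division_of cbox a b"
    unfolding tagged_partial_division_of_def p_def using D(1) J by fastforce
  moreover have "\<gamma> fine p"
    using J by (auto simp: fine_def p_def)
  ultimately have "(\<Sum>(x,k)\<in>p. norm (measure lborel k *\<^sub>R g x - integral k g)) < \<epsilon>"
    by (rule Henstock)
  then show ?thesis
    unfolding p_def by (simp add: sum.reindex[OF inj] case_prod_unfold)
qed

lemma indefinite_integral_defect:
  fixes F g :: "real \<Rightarrow> real"
  assumes gi: "g integrable_on {a..b}"
    and rep: "\<And>x. x \<in> {a..b} \<Longrightarrow> F x = F a + integral {a..x} g"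
    and uv: "a \<le> u" "u \<le> v" "v \<le> b"
  shows "norm (measure lborel {u..v} *\<^sub>R g y - integral {u..v} g) = \<bar>F v - F u - (v - u) * g y\<bar>"
proof -
  have "integral {a..u} g + integral {u..v} g = integral {a..v} g"
    using Henstock_Kurzweil_Integration.integral_combine[of a u v g]
      integrable_on_subinterval[OF gi, of a v] uv by auto
  then have "integral {u..v} g = F v - F u"
    using rep[of u] rep[of v] uv by auto
  then show ?thesis
    using uv(2) by (simp add: abs_minus_commute)
qed

(* On each ball, the half-interval carrying the large defect is a tagged interval to which
   the Henstock lemma applies. *)
lemma derivative_defect_radii_sum_less:
  fixes F g :: "real \<Rightarrow> real" and D :: "(real \<times> real) set"
  assumes gi: "g integrable_on {a..b}"
    and rep: "\<And>x. x \<in> {a..b} \<Longrightarrow> F x = F a + integral {a..x} g"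
    and Henstock: "\<And>p. p tagged_partial_division_of cbox a b \<Longrightarrow> \<gamma> fine p \<Longrightarrow>
      (\<Sum>(x,k)\<in>p. norm (measure lborel k *\<^sub>R g x - integral k g)) < \<epsilon>"
    and D: "finite D" "pairwise (\<lambda>i j. disjnt (cball (fst i) (snd i)) (cball (fst j) (snd j))) D"
    and balls: "\<And>x t. (x,t) \<in> D \<Longrightarrow> 0 < t \<and> cball x t \<subseteq> \<gamma> x \<and> cball x t \<subseteq> {a<..<b} \<and>
      (\<alpha> * t < \<bar>F (x+t) - F x - t * g x\<bar> \<or> \<alpha> * t < \<bar>F (x-t) - F x + t * g x\<bar>)"
  shows "(\<Sum>(x,t)\<in>D. \<alpha> * t) < \<epsilon>"
proof -
  define J where "J = (\<lambda>(x,t). if \<alpha> * t < \<bar>F (x+t) - F x - t * g x\<bar> then {x..x+t} else {x-t..x})"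
  have J: "fst i \<in> J i \<and> J i \<subseteq> cball (fst i) (snd i) \<and> J i \<subseteq> cbox a b \<and> J i \<subseteq> \<gamma> (fst i) \<and>
      (\<exists>u v. J i = cbox u v) \<and> \<alpha> * snd i < norm (measure lborel (J i) *\<^sub>R g (fst i) - integral (J i) g)"
    if "i \<in> D" for i
  proof -
    obtain x t where i: "i = (x,t)" by fastforce
    have t: "0 < t" "cball x t \<subseteq> \<gamma> x" "cball x t \<subseteq> {a<..<b}"
      "\<alpha> * t < \<bar>F (x+t) - F x - t * g x\<bar> \<or> \<alpha> * t < \<bar>F (x-t) - F x + t * g x\<bar>"
      using balls that i by auto
    have ab: "a < x - t" "x + t < b"
      using t(1) subsetD[OF t(3), of "x-t"] subsetD[OF t(3), of "x+t"]
      by (auto simp: cball_eq_atLeastAtMost)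
    show ?thesis
    proof (cases "\<alpha> * t < \<bar>F (x+t) - F x - t * g x\<bar>")
      case True
      then show ?thesis
        using ab t(1,2) indefinite_integral_defect[OF gi rep, of x "x+t" x] unfolding i J_def
        by (auto simp: cball_eq_atLeastAtMost)
    next
      case False
      then show ?thesis
        using ab t indefinite_integral_defect[OF gi rep, of "x-t" x x] unfolding i J_def
        by (auto simp: cball_eq_atLeastAtMost abs_minus_commute algebra_simps intro: exI[of _ "x-t"])
    qed
  qed
  have "(\<Sum>(x,t)\<in>D. \<alpha> * t) \<le> (\<Sum>i\<in>D. norm (measure lborel (J i) *\<^sub>R g (fst i) - integral (J i) g))"
    unfolding case_prod_unfold using J by (intro sum_mono) (simp add: less_imp_le)
  also have "\<dots> < \<epsilon>"
  proof (rule Henstock_lemma_family[of a b \<gamma> g \<epsilon> D "\<lambda>i. cball (fst i) (snd i)" fst J, OF Henstock D])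
    fix i assume "i \<in> D"
    then show "fst i \<in> J i \<and> J i \<subseteq> cball (fst i) (snd i) \<and> J i \<subseteq> cbox a b \<and> J i \<subseteq> \<gamma> (fst i) \<and>
        (\<exists>u v. J i = cbox u v)"
      using J by blast
  qed
  finally show ?thesis .
qed

lemma derivative_defect_small_ball:
  fixes F g :: "real \<Rightarrow> real"
  assumes "open G" "x \<in> G" "a < x" "x < b" "0 < d"
    and defect: "\<forall>\<delta>>0. \<exists>t. 0 < \<bar>t\<bar> \<and> \<bar>t\<bar> < \<delta> \<and> \<alpha> * \<bar>t\<bar> < \<bar>F (x+t) - F x - t * g x\<bar>"
  obtains t where "0 < t" "t < d" "cball x t \<subseteq> G" "cball x t \<subseteq> {a<..<b}"
    "\<alpha> * t < \<bar>F (x+t) - F x - t * g x\<bar> \<or> \<alpha> * t < \<bar>F (x-t) - F x + t * g x\<bar>"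
proof -
  obtain \<rho> where \<rho>: "\<rho> > 0" "ball x \<rho> \<subseteq> G"
    using assms(1,2) by (meson openE)
  define m where "m = min d (min \<rho> (min (x-a) (b-x)))"
  have "m > 0"
    using assms(3-5) \<rho>(1) by (simp add: m_def)
  with defect obtain t where t: "0 < \<bar>t\<bar>" "\<bar>t\<bar> < m" "\<alpha> * \<bar>t\<bar> < \<bar>F (x+t) - F x - t * g x\<bar>"
    by blast
  have "cball x \<bar>t\<bar> \<subseteq> ball x \<rho>"
    using t(2) by (simp add: cball_subset_ball_iff m_def)
  moreover have "cball x \<bar>t\<bar> \<subseteq> {a<..<b}"
    using t(2) by (auto simp: cball_eq_atLeastAtMost m_def)
  moreover have "\<alpha> * \<bar>t\<bar> < \<bar>F (x+\<bar>t\<bar>) - F x - \<bar>t\<bar> * g x\<bar> \<or> \<alpha> * \<bar>t\<bar> < \<bar>F (x-\<bar>t\<bar>) - F x + \<bar>t\<bar> * g x\<bar>"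
    using t(3) by (cases "t \<ge> 0") auto
  ultimately show ?thesis
    using t(1,2) \<rho>(2) by (intro that[of "\<bar>t\<bar>"]) (auto simp: m_def)
qed

(* Vitali covering by balls on which the defect exceeds \<alpha> times the radius; the Henstock lemma
   makes the total radius of every finite disjoint subfamily small. *)
lemma negligible_derivative_defect:
  fixes F g :: "real \<Rightarrow> real"
  assumes gi: "g integrable_on {a..b}"
    and rep: "\<And>x. x \<in> {a..b} \<Longrightarrow> F x = F a + integral {a..x} g"
    and \<alpha>: "\<alpha> > 0"
  shows "negligible {x\<in>{a<..<b}. \<forall>\<delta>>0. \<exists>t. 0 < \<bar>t\<bar> \<and> \<bar>t\<bar> < \<delta> \<and> \<alpha> * \<bar>t\<bar> < \<bar>F (x+t) - F x - t * g x\<bar>}"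
    (is "negligible ?E")
proof (unfold negligible_outer_le, intro allI impI)
  fix e :: real assume e: "e > 0"
  have "g integrable_on cbox a b" "e * \<alpha> / 2 > 0"
    using gi e \<alpha> by simp_all
  then obtain \<gamma> where "gauge \<gamma>"
    and Henstock: "\<And>p. p tagged_partial_division_of cbox a b \<Longrightarrow> \<gamma> fine p \<Longrightarrow>
      (\<Sum>(x,k)\<in>p. norm (measure lborel k *\<^sub>R g x - integral k g)) < e * \<alpha> / 2"
    by (rule Henstock_lemma) blast
  define K where "K = {(x,t). 0 < t \<and> cball x t \<subseteq> \<gamma> x \<and> cball x t \<subseteq> {a<..<b} \<and>
      (\<alpha> * t < \<bar>F (x+t) - F x - t * g x\<bar> \<or> \<alpha> * t < \<bar>F (x-t) - F x + t * g x\<bar>)}"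
  obtain C where C: "countable C" "C \<subseteq> K"
    and disj: "pairwise (\<lambda>i j. disjnt (cball (fst i) (snd i)) (cball (fst j) (snd j))) C"
    and cover: "negligible (?E - (\<Union>i\<in>C. cball (fst i) (snd i)))"
  proof (rule Vitali_covering_theorem_cballs[of K snd ?E fst])
    fix x d :: real assume x: "x \<in> ?E" and "0 < d"
    have \<gamma>x: "open (\<gamma> x)" "x \<in> \<gamma> x"
      using \<open>gauge \<gamma>\<close> unfolding gauge_def by auto
    have "a < x" "x < b"
      and defect: "\<forall>\<delta>>0. \<exists>t. 0 < \<bar>t\<bar> \<and> \<bar>t\<bar> < \<delta> \<and> \<alpha> * \<bar>t\<bar> < \<bar>F (x+t) - F x - t * g x\<bar>"
      using x unfolding mem_Collect_eq greaterThanLessThan_iff by blast+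
    obtain t where "0 < t" "t < d" "cball x t \<subseteq> \<gamma> x" "cball x t \<subseteq> {a<..<b}"
        "\<alpha> * t < \<bar>F (x+t) - F x - t * g x\<bar> \<or> \<alpha> * t < \<bar>F (x-t) - F x + t * g x\<bar>"
      by (rule derivative_defect_small_ball[where F=F and g=g and \<alpha>=\<alpha>, OF \<gamma>x \<open>a < x\<close> \<open>x < b\<close> \<open>0 < d\<close> defect])
    then show "\<exists>i. i \<in> K \<and> x \<in> cball (fst i) (snd i) \<and> snd i < d"
      unfolding K_def by (intro exI[of _ "(x, t)"]) simp
  qed (simp add: K_def case_prod_beta)
  show "\<exists>T. ?E \<subseteq> T \<and> T \<in> lmeasurable \<and> measure lebesgue T \<le> e"
  proof (rule lmeasurable_superset_of_almost_cover[OF C(1) _ cover])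
    fix D assume D: "D \<subseteq> C" "finite D"
    have balls: "0 < t \<and> cball x t \<subseteq> \<gamma> x \<and> cball x t \<subseteq> {a<..<b} \<and>
        (\<alpha> * t < \<bar>F (x+t) - F x - t * g x\<bar> \<or> \<alpha> * t < \<bar>F (x-t) - F x + t * g x\<bar>)"
      if "(x,t) \<in> D" for x t
    proof -
      have "(x,t) \<in> K" using that D(1) C(2) by blast
      then show ?thesis by (simp add: K_def)
    qed
    have "(\<Sum>(x,t)\<in>D. \<alpha> * t) < e * \<alpha> / 2"
      by (rule derivative_defect_radii_sum_less[OF gi rep Henstock D(2) pairwise_subset[OF disj D(1)] balls])
    then have "\<alpha> * (\<Sum>(x,t)\<in>D. t) < \<alpha> * (e / 2)"
      by (simp add: sum_distrib_left case_prod_unfold mult.commute)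
    then have "(\<Sum>(x,t)\<in>D. 2 * t) \<le> e"
      using \<alpha> by (simp add: sum_distrib_left[symmetric] case_prod_unfold)
    moreover have "measure lebesgue (\<Union>i\<in>D. cball (fst i) (snd i)) \<le> (\<Sum>i\<in>D. measure lebesgue (cball (fst i) (snd i)))"
      by (rule measure_UNION_le) (use D in auto)
    moreover have "(\<Sum>i\<in>D. measure lebesgue (cball (fst i) (snd i))) = (\<Sum>(x,t)\<in>D. 2 * t)"
      unfolding case_prod_unfold
      by (intro sum.cong refl) (auto simp: cball_eq_atLeastAtMost dest!: balls)
    ultimately show "measure lebesgue (\<Union>i\<in>D. cball (fst i) (snd i)) \<le> e"
      by linarith
  qed auto
qed

lemma indefinite_integral_has_real_derivative_ae:
  fixes F g :: "real \<Rightarrow> real"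
  assumes gi: "g integrable_on {a..b}"
    and rep: "\<And>x. x \<in> {a..b} \<Longrightarrow> F x = F a + integral {a..x} g"
  obtains N where "negligible N" "\<And>x. x \<in> {a<..<b} - N \<Longrightarrow> (F has_real_derivative g x) (at x)"
proof
  define E where "E = (\<lambda>n::nat. {x\<in>{a<..<b}. \<forall>\<delta>>0. \<exists>t. 0 < \<bar>t\<bar> \<and> \<bar>t\<bar> < \<delta> \<and>
      inverse (real (Suc n)) * \<bar>t\<bar> < \<bar>F (x+t) - F x - t * g x\<bar>})"
  have "negligible (E n)" for n
    unfolding E_def by (rule negligible_derivative_defect[OF gi rep]) auto
  then show "negligible (\<Union>n. E n)"
    by (rule negligible_Union_nat)
  fix x assume x: "x \<in> {a<..<b} - (\<Union>n. E n)"
  have "((\<lambda>t. (F (x + t) - F x) / t) \<longlongrightarrow> g x) (at 0)"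
  proof (rule tendstoI)
    fix e :: real assume "e > 0"
    then obtain n where n: "inverse (real (Suc n)) < e"
      using reals_Archimedean by blast
    have "x \<in> {a<..<b}" "x \<notin> E n"
      using x by blast+
    then have "\<not> (\<forall>\<delta>>0. \<exists>t. 0 < \<bar>t\<bar> \<and> \<bar>t\<bar> < \<delta> \<and>
        inverse (real (Suc n)) * \<bar>t\<bar> < \<bar>F (x+t) - F x - t * g x\<bar>)"
      unfolding E_def by blast
    then obtain \<delta> where "\<delta> > 0" and \<delta>: "\<forall>t. \<not> (0 < \<bar>t\<bar> \<and> \<bar>t\<bar> < \<delta> \<and>
        inverse (real (Suc n)) * \<bar>t\<bar> < \<bar>F (x+t) - F x - t * g x\<bar>)"
      by blast
    have "dist ((F (x + t) - F x) / t) (g x) < e" if "t \<noteq> 0" "dist t 0 < \<delta>" for t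
    proof -
      have "dist ((F (x + t) - F x) / t) (g x) = \<bar>F (x+t) - F x - t * g x\<bar> / \<bar>t\<bar>"
        using that(1) by (simp add: dist_real_def abs_divide[symmetric] diff_divide_distrib)
      also have "\<dots> \<le> inverse (real (Suc n))"
      proof -
        have t: "0 < \<bar>t\<bar>" "\<bar>t\<bar> < \<delta>" using that by auto
        then have "\<bar>F (x+t) - F x - t * g x\<bar> \<le> inverse (real (Suc n)) * \<bar>t\<bar>"
          using \<delta> t by (meson not_less)
        then show ?thesis using t(1) by (simp add: pos_divide_le_eq)
      qed
      finally show ?thesis using n by linarith
    qed
    with \<open>\<delta> > 0\<close> show "\<forall>\<^sub>F t in at 0. dist ((F (x + t) - F x) / t) (g x) < e"
      unfolding eventually_at by blast
  qed
  then show "(F has_real_derivative g x) (at x)"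
    by (simp add: DERIV_def)
qed

section \<open>Dirichlet energy of Sobolev maps\<close>

lemma sobolev12_deriv_ae:
  assumes "sobolev12 a b f"
  obtains g N where "g integrable_on {a..b}" "(\<lambda>x. (g x)\<^sup>2) integrable_on {a..b}"
    "\<And>x. x \<in> {a..b} \<Longrightarrow> f x = f a + integral {a..x} g"
    "negligible N" "\<And>x. x \<in> {a<..<b} - N \<Longrightarrow> deriv f x = g x"
proof -
  obtain g where g: "g absolutely_integrable_on {a..b}" "(\<lambda>x. (g x)\<^sup>2) integrable_on {a..b}"
      "\<And>x. x \<in> {a..b} \<Longrightarrow> f x = f a + integral {a..x} g"
    using assms unfolding sobolev12_def by blast
  then have gi: "g integrable_on {a..b}"
    using absolutely_integrable_on_def by blast
  obtain N where "negligible N" "\<And>x. x \<in> {a<..<b} - N \<Longrightarrow> (f has_real_derivative g x) (at x)"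
    using indefinite_integral_has_real_derivative_ae[OF gi g(3)] by blast
  then show ?thesis
    using that[OF gi g(2,3)] DERIV_imp_deriv by blast
qed

lemma Dir_sobolev12_eq_integral:
  assumes "sobolev12 a b f1" "sobolev12 a b f2" "a \<le> b"
  obtains g1 g2 S where "g1 integrable_on {a..b}" "g2 integrable_on {a..b}"
    "integral {a..b} g1 = f1 b - f1 a" "integral {a..b} g2 = f2 b - f2 a"
    "((\<lambda>x. (g1 x)\<^sup>2 + (g2 x)\<^sup>2) has_integral S) {a..b}" "Dir f1 f2 a b = ennreal S"
proof -
  obtain g1 N1 where g1: "g1 integrable_on {a..b}" "(\<lambda>x. (g1 x)\<^sup>2) integrable_on {a..b}"
      "\<And>x. x \<in> {a..b} \<Longrightarrow> f1 x = f1 a + integral {a..x} g1"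
      "negligible N1" "\<And>x. x \<in> {a<..<b} - N1 \<Longrightarrow> deriv f1 x = g1 x"
    using sobolev12_deriv_ae[OF assms(1)] by blast
  obtain g2 N2 where g2: "g2 integrable_on {a..b}" "(\<lambda>x. (g2 x)\<^sup>2) integrable_on {a..b}"
      "\<And>x. x \<in> {a..b} \<Longrightarrow> f2 x = f2 a + integral {a..x} g2"
      "negligible N2" "\<And>x. x \<in> {a<..<b} - N2 \<Longrightarrow> deriv f2 x = g2 x"
    using sobolev12_deriv_ae[OF assms(2)] by blast
  define S where "S = integral {a..b} (\<lambda>x. (g1 x)\<^sup>2 + (g2 x)\<^sup>2)"
  have S: "((\<lambda>x. (g1 x)\<^sup>2 + (g2 x)\<^sup>2) has_integral S) {a..b}"
    unfolding S_def using g1(2) g2(2) by (intro integrable_integral integrable_add)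
  have "AE x in lborel. x \<notin> N1 \<union> N2"
    using g1(4) g2(4) by (auto simp: negligible_iff_null_sets AE_completion_iff dest: AE_not_in)
  then have "AE x in lborel. ennreal ((deriv f1 x)\<^sup>2 + (deriv f2 x)\<^sup>2) * indicator {a<..<b} x =
      ennreal ((g1 x)\<^sup>2 + (g2 x)\<^sup>2) * indicator {a<..<b} x"
    by eventually_elim (auto simp: g1(5) g2(5) split: split_indicator)
  then have "Dir f1 f2 a b = (\<integral>\<^sup>+x. ennreal ((g1 x)\<^sup>2 + (g2 x)\<^sup>2) * indicator {a<..<b} x \<partial>lborel)"
    unfolding Dir_def by (rule nn_integral_cong_AE)
  also have "\<dots> = ennreal S"
    using S has_integral_Icc_iff_Ioo by (intro nn_integral_has_integral_lebesgue') auto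
  finally show ?thesis
    using g1(3)[of b] g2(3)[of b] assms(3) by (intro that[OF g1(1) g2(1) _ _ S]) auto
qed

(* Integrate the pointwise bound g1^2 + g2^2 >= g1 + g2 - 1/2 over [a,b]. *)
lemma Dir_ge_of_admissible:
  assumes adm: "admissible a b p1 p2 q1 q2 v1 v2" and "a < b"
    and rise: "b - a \<le> (q1 + q2) - (p1 + p2)"
  shows "ennreal ((b - a) / 2) \<le> Dir v1 v2 a b"
proof -
  obtain g1 g2 S where g: "g1 integrable_on {a..b}" "g2 integrable_on {a..b}"
    "integral {a..b} g1 = q1 - p1" "integral {a..b} g2 = q2 - p2"
    and S: "((\<lambda>x. (g1 x)\<^sup>2 + (g2 x)\<^sup>2) has_integral S) {a..b}" and Dir: "Dir v1 v2 a b = ennreal S"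
    using Dir_sobolev12_eq_integral[of a b v1 v2] adm \<open>a < b\<close> unfolding admissible_def by auto
  have "(g1 has_integral q1 - p1) {a..b}" "(g2 has_integral q2 - p2) {a..b}"
    using integrable_integral[OF g(1)] integrable_integral[OF g(2)] g(3,4) by simp_all
  moreover have "((\<lambda>x. 1/2) has_integral (b - a) / 2) {a..b}"
    using has_integral_const_real[of "1/2::real" a b] \<open>a < b\<close> by simp
  ultimately have "((\<lambda>x. ((g1 x)\<^sup>2 + (g2 x)\<^sup>2) - g1 x - g2 x + 1/2) has_integral
      S - (q1 - p1) - (q2 - p2) + (b - a) / 2) {a..b}"
    using S by (intro has_integral_add has_integral_diff)
  moreover have "0 \<le> ((g1 x)\<^sup>2 + (g2 x)\<^sup>2) - g1 x - g2 x + 1/2" for x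
  proof -
    have "0 \<le> (g1 x - 1/2)\<^sup>2 + (g2 x - 1/2)\<^sup>2" by simp
    then show ?thesis by (simp add: power2_eq_square algebra_simps)
  qed
  ultimately have "0 \<le> S - (q1 - p1) - (q2 - p2) + (b - a) / 2"
    by (rule has_integral_nonneg)
  then have "(b - a) / 2 \<le> S"
    using rise by (simp add: field_simps)
  then show ?thesis
    unfolding Dir by (rule ennreal_leI)
qed

section \<open>The Cantor construction\<close>

lemma cantor_interval_bounds:
  assumes "(c,d) \<in> cantor_intervals n"
  shows "d - c = 1 / 3^n" "0 \<le> c" "c < d" "d \<le> 1"
proof -
  have "d - c = 1 / 3^n \<and> 0 \<le> c \<and> d \<le> 1"
    using assms
  proof (induction n arbitrary: c d)
    case 0
    then show ?case by simp
  next
    case (Suc n)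
    then obtain a b where "(a,b) \<in> cantor_intervals n"
      and cd: "(c,d) = (a, a + (b-a)/3) \<or> (c,d) = (b - (b-a)/3, b)"
      by auto
    with Suc.IH have ab: "b - a = 1 / 3^n" "0 \<le> a" "b \<le> 1"
      by blast+
    have third: "(b-a)/3 = 1 / 3^Suc n"
      using ab(1) by simp
    have "0 \<le> b - a"
      unfolding ab(1) by simp
    then have "a + (b-a)/3 \<le> b" "0 \<le> b - (b-a)/3"
      using ab(2) by (simp_all add: field_simps)
    with cd ab(2,3) show ?case
      unfolding third[symmetric] by auto
  qed
  then show "d - c = 1 / 3^n" "0 \<le> c" "d \<le> 1"
    by simp_all
  have "0 < d - c"
    using \<open>d - c = 1 / 3^n\<close> by simp
  then show "c < d"
    by simp
qed

lemma finite_cantor_intervals: "finite (cantor_intervals n)"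
  by (induction n) auto

lemma card_cantor_intervals_le: "card (cantor_intervals n) \<le> 2^n"
proof (induction n)
  case 0
  then show ?case by simp
next
  case (Suc n)
  have "card (cantor_intervals (Suc n)) \<le>
      (\<Sum>p\<in>cantor_intervals n. card ((\<lambda>(a,b). {(a, a + (b-a)/3), (b - (b-a)/3, b)}) p))"
    unfolding cantor_intervals.simps by (rule card_UN_le[OF finite_cantor_intervals])
  also have "\<dots> \<le> (\<Sum>_\<in>cantor_intervals n. 2)"
    by (rule sum_mono) (auto simp: card_insert_if)
  also have "\<dots> \<le> 2 * 2^n"
    using Suc by simp
  finally show ?case by simp
qed

lemma mem_cantor_step_iff:
  "x \<in> cantor_step n \<longleftrightarrow> (\<exists>c d. (c,d) \<in> cantor_intervals n \<and> c \<le> x \<and> x \<le> d)"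
  unfolding cantor_step_def by force

lemma removed_intervals_Suc:
  "removed_intervals (Suc i) =
    removed_intervals i \<union> (\<lambda>(a,b). (a + (b-a)/3, b - (b-a)/3)) ` cantor_intervals i"
  unfolding removed_intervals_def by (auto simp: lessThan_Suc)

lemma removed_intervals_mono: "i \<le> j \<Longrightarrow> removed_intervals i \<subseteq> removed_intervals j"
  unfolding removed_intervals_def by (intro UN_mono) auto

lemma finite_removed_intervals: "finite (removed_intervals i)"
  unfolding removed_intervals_def using finite_cantor_intervals by auto

lemma removed_interval_subset:
  assumes "(c,d) \<in> removed_intervals i"
  shows "{c..d} \<subseteq> {0..1}"
proof -
  obtain n a b where ab: "(a,b) \<in> cantor_intervals n" and "c = a + (b-a)/3" "d = b - (b-a)/3"
    using assms unfolding removed_intervals_def by auto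
  moreover have "0 \<le> a" "a < b" "b \<le> 1"
    using cantor_interval_bounds[OF ab] by simp_all
  ultimately show ?thesis
    by (simp add: field_simps)
qed

lemma cantor_step_or_removed:
  assumes "x \<in> {0..1}"
  shows "x \<in> cantor_step i \<or> (\<exists>(c,d)\<in>removed_intervals i. c < x \<and> x < d)"
proof (induction i)
  case 0
  then show ?case using assms by (simp add: cantor_step_def)
next
  case (Suc i)
  show ?case
  proof (cases "x \<in> cantor_step i")
    case True
    then obtain a b where ab: "(a,b) \<in> cantor_intervals i" "a \<le> x" "x \<le> b"
      unfolding mem_cantor_step_iff by auto
    consider "x \<le> a + (b-a)/3" | "b - (b-a)/3 \<le> x" | "a + (b-a)/3 < x \<and> x < b - (b-a)/3"
      by linarith
    then show ?thesis
    proof cases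
      case 1
      have "(a, a + (b-a)/3) \<in> cantor_intervals (Suc i)"
        using ab(1) by force
      then show ?thesis
        using 1 ab(2) unfolding mem_cantor_step_iff by blast
    next
      case 2
      have "(b - (b-a)/3, b) \<in> cantor_intervals (Suc i)"
        using ab(1) by force
      then show ?thesis
        using 2 ab(3) unfolding mem_cantor_step_iff by blast
    next
      case 3
      have "(a + (b-a)/3, b - (b-a)/3) \<in> removed_intervals (Suc i)"
        using ab(1) unfolding removed_intervals_Suc by force
      then show ?thesis
        using 3 by (intro disjI2 bexI) auto
    qed
  next
    case False
    then have "\<exists>(c,d)\<in>removed_intervals i. c < x \<and> x < d"
      using Suc.IH by simp
    then show ?thesis
      using removed_intervals_mono[of i "Suc i"] by auto
  qed
qed

lemma cantor_set_subset: "cantor_set \<subseteq> {0..1}"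
proof -
  have "cantor_step 0 = {0..1}"
    by (simp add: cantor_step_def)
  then show ?thesis
    unfolding cantor_set_def by blast
qed

lemma removed_interval_near_cantor_set:
  assumes "x \<in> cantor_set"
  obtains c d y where "(c,d) \<in> removed_intervals (Suc n)" "c < y" "y < d" "\<bar>y - x\<bar> \<le> 1 / 3^n"
proof -
  have "x \<in> cantor_step n"
    using assms unfolding cantor_set_def by blast
  then obtain a b where ab: "(a,b) \<in> cantor_intervals n" "a \<le> x" "x \<le> b"
    unfolding mem_cantor_step_iff by auto
  have removed: "(a + (b-a)/3, b - (b-a)/3) \<in> removed_intervals (Suc n)"
    using ab(1) unfolding removed_intervals_Suc by force
  have len: "b - a = 1 / 3^n" "a < b"
    using cantor_interval_bounds[OF ab(1)] by simp_all
  have "a + (b-a)/3 < (a+b)/2" "(a+b)/2 < b - (b-a)/3"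
    using len(2) by (simp_all add: field_simps)
  moreover have "\<bar>(a+b)/2 - x\<bar> \<le> b - a"
    using ab(2,3) by (simp add: abs_le_iff field_simps)
  then have "\<bar>(a+b)/2 - x\<bar> \<le> 1 / 3^n"
    using len(1) by simp
  ultimately show ?thesis
    using removed by (intro that) auto
qed

lemma cantor_set_limit_of_removed_points:
  assumes x: "x \<in> cantor_set"
  obtains y where "y \<longlonglongrightarrow> x" "\<forall>n. \<exists>c d. (c,d) \<in> removed_intervals (Suc n) \<and> c < y n \<and> y n < d"
proof -
  have "\<exists>y. (\<exists>c d. (c,d) \<in> removed_intervals (Suc n) \<and> c < y \<and> y < d) \<and> \<bar>y - x\<bar> \<le> 1 / 3^n" for n
  proof -
    obtain c d y where "(c,d) \<in> removed_intervals (Suc n)" "c < y" "y < d" "\<bar>y - x\<bar> \<le> 1 / 3^n"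
      using removed_interval_near_cantor_set[OF x] .
    then show ?thesis by blast
  qed
  then obtain y where y: "\<forall>n. (\<exists>c d. (c,d) \<in> removed_intervals (Suc n) \<and> c < y n \<and> y n < d) \<and>
      \<bar>y n - x\<bar> \<le> 1 / 3^n"
    using choice[of "\<lambda>n y. (\<exists>c d. (c,d) \<in> removed_intervals (Suc n) \<and> c < y \<and> y < d) \<and> \<bar>y - x\<bar> \<le> 1 / 3^n"]
    by blast
  have "(\<lambda>n. y n - x) \<longlonglongrightarrow> 0"
    by (rule Lim_null_comparison[OF _ LIMSEQ_power_zero[of "1/3::real"]])
       (use y in \<open>simp_all add: power_one_over\<close>)
  then have "y \<longlonglongrightarrow> x"
    by (rule LIM_zero_cancel)
  then show ?thesis
    using y that by blast
qed

lemma negligible_cantor_set: "negligible cantor_set"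
proof (unfold negligible_outer_le, intro allI impI)
  fix e :: real assume "e > 0"
  then obtain n where n: "(2/3::real)^n < e"
    using real_arch_pow_inv[of e "2/3"] by auto
  have "cantor_step n \<in> lmeasurable"
    unfolding cantor_step_def using finite_cantor_intervals by (intro fmeasurable.finite_UN) auto
  moreover have "measure lebesgue (cantor_step n) \<le> (2/3)^n"
  proof -
    have "measure lebesgue (cantor_step n) \<le> (\<Sum>p\<in>cantor_intervals n. measure lebesgue ((\<lambda>(a,b). {a..b}) p))"
      unfolding cantor_step_def by (rule measure_UNION_le[OF finite_cantor_intervals]) auto
    also have "\<dots> = (\<Sum>_\<in>cantor_intervals n. 1 / 3^n)"
    proof (rule sum.cong[OF refl])
      fix p assume "p \<in> cantor_intervals n"
      moreover obtain a b where "p = (a,b)" by fastforce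
      ultimately show "measure lebesgue ((\<lambda>(a,b). {a..b}) p) = 1 / 3^n"
        using cantor_interval_bounds[of a b n] by simp
    qed
    also have "\<dots> \<le> 2^n / 3^n"
      using card_cantor_intervals_le[of n] by (simp add: divide_right_mono)
    finally show ?thesis by (simp add: power_divide)
  qed
  moreover have "cantor_set \<subseteq> cantor_step n"
    unfolding cantor_set_def by blast
  ultimately show "\<exists>T. cantor_set \<subseteq> T \<and> T \<in> lmeasurable \<and> measure lebesgue T \<le> e"
    using n by (intro exI[of _ "cantor_step n"]) auto
qed

section \<open>Diamonds\<close>

lemma is_diamond_lt:
  assumes "is_diamond f1 f2 c d" "c < y" "y < d"
  shows "f1 y < f2 y"
proof -
  obtain h where h: "\<forall>x\<in>{c..d}. f1 x = (if x \<le> (c+d)/2 then h else h + (x - (c+d)/2)) \<and>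
      f2 x = (if x \<le> (c+d)/2 then h + (x - c) else h + (d-c)/2)"
    using assms(1) unfolding is_diamond_def by blast
  have "y \<in> {c..d}" using assms by auto
  then show ?thesis
    using h assms(2,3) by (cases "y \<le> (c+d)/2") (auto simp: field_simps)
qed

lemma is_diamond_has_derivative:
  assumes "is_diamond f1 f2 c d" "c < x" "x < d" "x \<noteq> (c+d)/2"
  obtains D1 D2 where "(f1 has_real_derivative D1) (at x)" "(f2 has_real_derivative D2) (at x)"
    "D1\<^sup>2 + D2\<^sup>2 = 1" "D1 + D2 = 1"
proof -
  obtain h where h: "\<forall>x\<in>{c..d}. f1 x = (if x \<le> (c+d)/2 then h else h + (x - (c+d)/2)) \<and>
      f2 x = (if x \<le> (c+d)/2 then h + (x - c) else h + (d-c)/2)"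
    using assms(1) unfolding is_diamond_def by blast
  show ?thesis
  proof (cases "x < (c+d)/2")
    case True
    have "f1 y = h" "f2 y = h + (y - c)" if "y \<in> {c<..<(c+d)/2}" for y
      using h that by auto
    then have "(f1 has_real_derivative 0) (at x)" "(f2 has_real_derivative 1) (at x)"
      using True assms(2)
      by (auto intro!: has_field_derivative_transform_within_open[of "\<lambda>_. h" 0 x "{c<..<(c+d)/2}"]
          has_field_derivative_transform_within_open[of "\<lambda>y. h + (y - c)" 1 x "{c<..<(c+d)/2}"]
          derivative_eq_intros)
    then show ?thesis
      using that by force
  next
    case False
    then have right: "(c+d)/2 < x"
      using assms(4) by auto
    have "f1 y = h + (y - (c+d)/2)" "f2 y = h + (d-c)/2" if "y \<in> {(c+d)/2<..<d}" for y
      using h that by auto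
    then have "(f1 has_real_derivative 1) (at x)" "(f2 has_real_derivative 0) (at x)"
      using right assms(3)
      by (auto intro!: has_field_derivative_transform_within_open[of "\<lambda>y. h + (y - (c+d)/2)" 1 x "{(c+d)/2<..<d}"]
          has_field_derivative_transform_within_open[of "\<lambda>_. h + (d-c)/2" 0 x "{(c+d)/2<..<d}"]
          derivative_eq_intros)
    then show ?thesis
      using that by force
  qed
qed

lemma is_double_line_has_derivative:
  assumes "is_double_line f1 f2 c d" "c < x" "x < d"
  shows "((\<lambda>y. f1 y + f2 y - y) has_real_derivative 1) (at x)"
proof -
  obtain p where p: "\<forall>x\<in>{c..d}. f1 x = x + p \<and> f2 x = x + p"
    using assms(1) unfolding is_double_line_def by blast
  show ?thesis
    by (rule has_field_derivative_transform_within_open[of "\<lambda>y. y + 2*p" 1 x "{c<..<d}"])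
       (use p assms in \<open>auto intro!: derivative_eq_intros\<close>)
qed

lemma le_of_nonneg_derivative_off_finite:
  fixes f f' :: "real \<Rightarrow> real"
  assumes "a \<le> b" "continuous_on {a..b} f" "finite S"
    and "\<And>x. x \<in> {a<..<b} - S \<Longrightarrow> (f has_real_derivative f' x) (at x)"
    and "\<And>x. 0 \<le> f' x"
  shows "f a \<le> f b"
proof -
  have "(f' has_integral f b - f a) {a..b}"
    using assms(1-4)
    by (intro fundamental_theorem_of_calculus_interior_strong)
       (auto simp: has_real_derivative_iff_has_vector_derivative)
  then have "0 \<le> f b - f a"
    using assms(5) by (rule has_integral_nonneg)
  then show ?thesis by simp
qed

lemma trace_mono_of_cantor_pattern:
  fixes f1 f2 :: "real \<Rightarrow> real"
  assumes cont: "continuous_on {0..1} f1" "continuous_on {0..1} f2"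
    and diam: "\<And>c d. (c,d) \<in> removed_intervals i \<Longrightarrow> is_diamond f1 f2 c d"
    and line: "\<And>c d. (c,d) \<in> cantor_intervals i \<Longrightarrow> is_double_line f1 f2 c d"
    and ab: "0 \<le> a" "a \<le> b" "b \<le> 1"
  shows "f1 a + f2 a - a \<le> f1 b + f2 b - b"
proof -
  define R where "R = removed_intervals i"
  define C where "C = cantor_intervals i"
  define S where "S = fst ` R \<union> snd ` R \<union> (\<lambda>(c,d). (c+d)/2) ` R \<union> fst ` C \<union> snd ` C"
  define f' where "f' x = (if \<exists>(c,d)\<in>R. c < x \<and> x < d then 0 else 1::real)" for x
  have "continuous_on {a..b} (\<lambda>x. f1 x + f2 x - x)"
    using ab by (intro continuous_intros continuous_on_subset[OF cont(1)] continuous_on_subset[OF cont(2)]) auto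
  moreover have "finite S"
    unfolding S_def R_def C_def using finite_removed_intervals finite_cantor_intervals by auto
  moreover have "((\<lambda>x. f1 x + f2 x - x) has_real_derivative f' x) (at x)" if x: "x \<in> {a<..<b} - S" for x
  proof (cases "\<exists>(c,d)\<in>R. c < x \<and> x < d")
    case True
    then obtain c d where cd: "(c,d) \<in> R" "c < x" "x < d" by blast
    have "x \<noteq> (c+d)/2"
      using x cd(1) unfolding S_def by force
    then obtain D1 D2 where "(f1 has_real_derivative D1) (at x)" "(f2 has_real_derivative D2) (at x)" "D1 + D2 = 1"
      using is_diamond_has_derivative[OF diam cd(2,3)] cd(1) unfolding R_def by metis
    then have "((\<lambda>x. f1 x + f2 x - x) has_real_derivative D1 + D2 - 1) (at x)"
      by (auto intro!: derivative_eq_intros)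
    then show ?thesis
      using True \<open>D1 + D2 = 1\<close> by (simp add: f'_def)
  next
    case False
    then have "x \<in> cantor_step i"
      using cantor_step_or_removed[of x i] x ab unfolding R_def by auto
    then obtain c d where cd: "(c,d) \<in> C" "c \<le> x" "x \<le> d"
      unfolding mem_cantor_step_iff C_def by blast
    moreover have "x \<noteq> c" "x \<noteq> d"
      using x cd(1) unfolding S_def by force+
    ultimately have "((\<lambda>x. f1 x + f2 x - x) has_real_derivative 1) (at x)"
      using is_double_line_has_derivative line unfolding C_def by fastforce
    then show ?thesis
      using False by (simp add: f'_def)
  qed
  moreover have "0 \<le> f' x" for x
    by (simp add: f'_def)
  ultimately show ?thesis
    by (rule le_of_nonneg_derivative_off_finite[OF ab(2)])
qed

lemma is_diamond_from_left_end:
  assumes "is_diamond f1 f2 c d" "x \<in> {c..d}"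
  shows "f1 x = (if x \<le> (c+d)/2 then f1 c else f1 c + (x - (c+d)/2))"
    "f2 x = (if x \<le> (c+d)/2 then f1 c + (x - c) else f1 c + (d-c)/2)"
proof -
  obtain h where h: "\<forall>x\<in>{c..d}. f1 x = (if x \<le> (c+d)/2 then h else h + (x - (c+d)/2)) \<and>
      f2 x = (if x \<le> (c+d)/2 then h + (x - c) else h + (d-c)/2)" and "c < d"
    using assms(1) unfolding is_diamond_def by blast
  then have "f1 c = h" by auto
  then show "f1 x = (if x \<le> (c+d)/2 then f1 c else f1 c + (x - (c+d)/2))"
    "f2 x = (if x \<le> (c+d)/2 then f1 c + (x - c) else f1 c + (d-c)/2)"
    using h assms(2) by auto
qed

lemma is_diamond_limit:
  assumes ev: "\<forall>\<^sub>F k in sequentially. is_diamond (f k) (g k) c d"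
    and lim_f: "\<And>x. x \<in> {c..d} \<Longrightarrow> (\<lambda>k. f k x) \<longlonglongrightarrow> F x"
    and lim_g: "\<And>x. x \<in> {c..d} \<Longrightarrow> (\<lambda>k. g k x) \<longlonglongrightarrow> G x"
  shows "is_diamond F G c d"
proof -
  have "c < d"
    using eventually_happens[OF ev] unfolding is_diamond_def by auto
  then have c: "c \<in> {c..d}" by simp
  have "F x = (if x \<le> (c+d)/2 then F c else F c + (x - (c+d)/2)) \<and>
      G x = (if x \<le> (c+d)/2 then F c + (x - c) else F c + (d-c)/2)" if x: "x \<in> {c..d}" for x
  proof
    have "\<forall>\<^sub>F k in sequentially. f k x = (if x \<le> (c+d)/2 then f k c else f k c + (x - (c+d)/2))"
      using ev by eventually_elim (rule is_diamond_from_left_end(1)[OF _ x])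
    moreover have "(\<lambda>k. if x \<le> (c+d)/2 then f k c else f k c + (x - (c+d)/2)) \<longlonglongrightarrow>
        (if x \<le> (c+d)/2 then F c else F c + (x - (c+d)/2))"
      using lim_f[OF c] by (auto intro!: tendsto_intros)
    ultimately have "(\<lambda>k. f k x) \<longlonglongrightarrow> (if x \<le> (c+d)/2 then F c else F c + (x - (c+d)/2))"
      by (simp add: tendsto_cong)
    with lim_f[OF x] show "F x = (if x \<le> (c+d)/2 then F c else F c + (x - (c+d)/2))"
      by (rule LIMSEQ_unique)
  next
    have "\<forall>\<^sub>F k in sequentially. g k x = (if x \<le> (c+d)/2 then f k c + (x - c) else f k c + (d-c)/2)"
      using ev by eventually_elim (rule is_diamond_from_left_end(2)[OF _ x])
    moreover have "(\<lambda>k. if x \<le> (c+d)/2 then f k c + (x - c) else f k c + (d-c)/2) \<longlonglongrightarrow>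
        (if x \<le> (c+d)/2 then F c + (x - c) else F c + (d-c)/2)"
      using lim_f[OF c] by (auto intro!: tendsto_intros)
    ultimately have "(\<lambda>k. g k x) \<longlonglongrightarrow> (if x \<le> (c+d)/2 then F c + (x - c) else F c + (d-c)/2)"
      by (simp add: tendsto_cong)
    with lim_g[OF x] show "G x = (if x \<le> (c+d)/2 then F c + (x - c) else F c + (d-c)/2)"
      by (rule LIMSEQ_unique)
  qed
  with \<open>c < d\<close> show ?thesis
    unfolding is_diamond_def by blast
qed

lemma Dir_le_of_removed_diamonds:
  assumes diam: "\<And>n c d. (c,d) \<in> removed_intervals n \<Longrightarrow> is_diamond f1 f2 c d"
    and ab: "0 \<le> a" "a \<le> b" "b \<le> 1"
  shows "Dir f1 f2 a b \<le> ennreal (b - a)"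
proof -
  define M where "M = (\<Union>n. (\<lambda>(c,d). (c+d)/2) ` removed_intervals n)"
  have "countable M"
    unfolding M_def by (rule countable_UN) (auto intro: countable_finite finite_removed_intervals)
  then have "AE x in lborel. x \<notin> M"
    by (intro AE_not_in countable_imp_null_set_lborel)
  moreover have "AE x in lborel. x \<notin> cantor_set"
    using negligible_cantor_set by (auto simp: negligible_iff_null_sets AE_completion_iff dest: AE_not_in)
  ultimately have "AE x in lborel. ennreal ((deriv f1 x)\<^sup>2 + (deriv f2 x)\<^sup>2) * indicator {a<..<b} x \<le>
      indicator {a<..<b} x"
  proof eventually_elim
    case (elim x)
    show ?case
    proof (cases "x \<in> {a<..<b}")
      case True
      obtain i where "x \<notin> cantor_step i"
        using elim unfolding cantor_set_def by blast
      then obtain c d where cd: "(c,d) \<in> removed_intervals i" "c < x" "x < d"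
        using cantor_step_or_removed[of x i] True ab by auto
      moreover have "x \<noteq> (c+d)/2"
        using elim cd(1) unfolding M_def by force
      ultimately obtain D1 D2 where "(f1 has_real_derivative D1) (at x)"
          "(f2 has_real_derivative D2) (at x)" "D1\<^sup>2 + D2\<^sup>2 = 1"
        using is_diamond_has_derivative[OF diam] by metis
      then have "(deriv f1 x)\<^sup>2 + (deriv f2 x)\<^sup>2 = 1"
        using DERIV_imp_deriv by metis
      then show ?thesis
        using True by simp
    qed simp
  qed
  then have "Dir f1 f2 a b \<le> (\<integral>\<^sup>+x. indicator {a<..<b} x \<partial>lborel)"
    unfolding Dir_def by (rule nn_integral_mono_AE)
  also have "\<dots> = ennreal (b - a)"
    using ab(2) by simp
  finally show ?thesis .
qed

section \<open>Limits of pluri-diamonds modelled on the Cantor construction\<close>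

lemma dir_quasiminimizer_of_removed_diamonds:
  assumes diam: "\<And>n c d. (c,d) \<in> removed_intervals n \<Longrightarrow> is_diamond f1 f2 c d"
    and mono: "\<And>a b. 0 \<le> a \<Longrightarrow> a \<le> b \<Longrightarrow> b \<le> 1 \<Longrightarrow> f1 a + f2 a - a \<le> f1 b + f2 b - b"
  shows "dir_quasiminimizer 4 f1 f2"
  unfolding dir_quasiminimizer_def
proof (intro allI impI)
  fix a b v1 v2
  assume ab: "0 \<le> a \<and> a < b \<and> b \<le> 1"
    and "dir_minimizing a b (f1 a) (f2 a) (f1 b) (f2 b) v1 v2"
  then have "admissible a b (f1 a) (f2 a) (f1 b) (f2 b) v1 v2"
    unfolding dir_minimizing_def by blast
  moreover have "b - a \<le> (f1 b + f2 b) - (f1 a + f2 a)"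
    using mono[of a b] ab by linarith
  ultimately have lower: "ennreal ((b - a) / 2) \<le> Dir v1 v2 a b"
    using ab by (intro Dir_ge_of_admissible) auto
  have "Dir f1 f2 a b \<le> ennreal (b - a)"
    using ab by (intro Dir_le_of_removed_diamonds diam) auto
  also have "\<dots> \<le> ennreal (4 * ((b - a) / 2))"
    using ab by (intro ennreal_leI) simp
  also have "\<dots> = ennreal 4 * ennreal ((b - a) / 2)"
    using ab by (intro ennreal_mult) auto
  also have "\<dots> \<le> ennreal 4 * Dir v1 v2 a b"
    using lower by (rule mult_left_mono) simp
  finally show "Dir f1 f2 a b \<le> ennreal 4 * Dir v1 v2 a b" .
qed

lemma branch_set_eq_cantor_set:
  assumes diam: "\<And>n c d. (c,d) \<in> removed_intervals n \<Longrightarrow> is_diamond f1 f2 c d"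
    and collapse: "\<And>x. x \<in> cantor_set \<Longrightarrow> f1 x = f2 x"
  shows "branch_set f1 f2 = cantor_set"
proof -
  define \<sigma> where "\<sigma> y = real (card {f1 y, f2 y})" for y
  have two: "\<sigma> y = 2" if "(c,d) \<in> removed_intervals n" "c < y" "y < d" for n c d y
  proof -
    have "f1 y \<noteq> f2 y"
      using is_diamond_lt[OF diam[OF that(1)] that(2,3)] by simp
    then show ?thesis
      by (simp add: \<sigma>_def)
  qed
  have "continuous (at x within {0..1}) \<sigma>" if x: "x \<in> {0..1}" "x \<notin> cantor_set" for x
  proof -
    obtain i where "x \<notin> cantor_step i"
      using x(2) unfolding cantor_set_def by blast
    then obtain c d where cd: "(c,d) \<in> removed_intervals i" "c < x" "x < d"
      using cantor_step_or_removed[OF x(1), of i] by auto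
    have "continuous_on {c<..<d} \<sigma>"
      using two[OF cd(1)] by (intro continuous_on_eq[OF continuous_on_const]) auto
    then have "isCont \<sigma> x"
      using cd(2,3) by (simp add: continuous_on_eq_continuous_at)
    then show ?thesis
      by (rule continuous_at_imp_continuous_at_within)
  qed
  moreover have "\<not> continuous (at x within {0..1}) \<sigma>" if x: "x \<in> cantor_set" for x
  proof
    assume cont: "continuous (at x within {0..1}) \<sigma>"
    obtain y where "y \<longlonglongrightarrow> x"
      and y: "\<forall>n. \<exists>c d. (c,d) \<in> removed_intervals (Suc n) \<and> c < y n \<and> y n < d"
      using cantor_set_limit_of_removed_points[OF x] by blast
    have y01: "y n \<in> {0..1}" and two_y: "\<sigma> (y n) = 2" for n
    proof -
      obtain c d where cd: "(c,d) \<in> removed_intervals (Suc n)" "c < y n" "y n < d"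
        using y by blast
      then show "y n \<in> {0..1}" "\<sigma> (y n) = 2"
        using removed_interval_subset[OF cd(1)] two[OF cd] by auto
    qed
    from \<open>y \<longlonglongrightarrow> x\<close> have "(\<lambda>n. \<sigma> (y n)) \<longlonglongrightarrow> \<sigma> x"
      by (rule continuous_within_tendsto_compose'[OF cont y01])
    then have "\<sigma> x = 2"
      unfolding two_y by (simp add: LIMSEQ_const_iff)
    moreover have "\<sigma> x = 1"
      using collapse[OF x] by (simp add: \<sigma>_def)
    ultimately show False
      by simp
  qed
  ultimately show ?thesis
    using cantor_set_subset unfolding branch_set_def \<sigma>_def[symmetric] by blast
qed

locale cantor_pluri_diamond_limit =
  fixes umin umax :: "nat \<Rightarrow> real \<Rightarrow> real" and s :: "nat \<Rightarrow> nat" and vmin vmax :: "real \<Rightarrow> real"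
  assumes cont: "\<And>i. i \<ge> 1 \<Longrightarrow> continuous_on {0..1} (umin i) \<and> continuous_on {0..1} (umax i)"
    and diam: "\<And>i c d. i \<ge> 1 \<Longrightarrow> (c,d) \<in> removed_intervals i \<Longrightarrow> is_diamond (umin i) (umax i) c d"
    and line: "\<And>i c d. i \<ge> 1 \<Longrightarrow> (c,d) \<in> cantor_intervals i \<Longrightarrow> is_double_line (umin i) (umax i) c d"
    and s: "filterlim s at_top sequentially"
    and lim_min: "\<And>x. x \<in> {0..1} \<Longrightarrow> (\<lambda>k. umin (s k) x) \<longlonglongrightarrow> vmin x"
    and lim_max: "\<And>x. x \<in> {0..1} \<Longrightarrow> (\<lambda>k. umax (s k) x) \<longlonglongrightarrow> vmax x"
begin

lemma eventually_index_ge: "\<forall>\<^sub>F k in sequentially. n \<le> s k"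
  using s by (simp add: filterlim_at_top)

lemma limit_is_diamond:
  assumes cd: "(c,d) \<in> removed_intervals n"
  shows "is_diamond vmin vmax c d"
proof (rule is_diamond_limit)
  have "1 \<le> n"
    using cd by (cases n) (auto simp: removed_intervals_def)
  show "\<forall>\<^sub>F k in sequentially. is_diamond (umin (s k)) (umax (s k)) c d"
    using eventually_index_ge[of n]
  proof eventually_elim
    case (elim k)
    then show ?case
      using diam removed_intervals_mono[OF elim] cd \<open>1 \<le> n\<close> by auto
  qed
  show "(\<lambda>k. umin (s k) x) \<longlonglongrightarrow> vmin x" "(\<lambda>k. umax (s k) x) \<longlonglongrightarrow> vmax x" if "x \<in> {c..d}" for x
    using removed_interval_subset[OF cd] that lim_min lim_max by auto
qed

lemma limit_collapses_on_cantor_set: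
  assumes x: "x \<in> cantor_set"
  shows "vmin x = vmax x"
proof -
  have "\<forall>\<^sub>F k in sequentially. umax (s k) x = umin (s k) x"
    using eventually_index_ge[of 1]
  proof eventually_elim
    case (elim k)
    have "x \<in> cantor_step (s k)"
      using x unfolding cantor_set_def by blast
    then obtain c d where cd: "(c,d) \<in> cantor_intervals (s k)" "c \<le> x" "x \<le> d"
      unfolding mem_cantor_step_iff by blast
    then obtain p where "\<forall>y\<in>{c..d}. umin (s k) y = y + p \<and> umax (s k) y = y + p"
      using line[OF elim] unfolding is_double_line_def by blast
    then show ?case
      using cd(2,3) by auto
  qed
  moreover have "x \<in> {0..1}"
    using x cantor_set_subset by blast
  ultimately have "(\<lambda>k. umin (s k) x) \<longlonglongrightarrow> vmax x"
    using lim_max by (auto intro: Lim_transform_eventually)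
  with lim_min[OF \<open>x \<in> {0..1}\<close>] show ?thesis
    by (rule LIMSEQ_unique)
qed

lemma limit_trace_mono:
  assumes ab: "0 \<le> a" "a \<le> b" "b \<le> 1"
  shows "vmin a + vmax a - a \<le> vmin b + vmax b - b"
proof (rule tendsto_le[OF sequentially_bot])
  show "(\<lambda>k. umin (s k) b + umax (s k) b - b) \<longlonglongrightarrow> vmin b + vmax b - b"
    "(\<lambda>k. umin (s k) a + umax (s k) a - a) \<longlonglongrightarrow> vmin a + vmax a - a"
    using ab by (auto intro!: tendsto_intros lim_min lim_max)
  show "\<forall>\<^sub>F k in sequentially. umin (s k) a + umax (s k) a - a \<le> umin (s k) b + umax (s k) b - b"
    using eventually_index_ge[of 1]
  proof eventually_elim
    case (elim k)
    show ?case
      using cont[OF elim] diam[OF elim] line[OF elim] ab by (intro trace_mono_of_cantor_pattern) auto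
  qed
qed

end

theorem mainTheorem5:
  fixes umin umax :: "nat \<Rightarrow> real \<Rightarrow> real"
    and r :: "nat \<Rightarrow> nat"
    and vmin vmax :: "real \<Rightarrow> real"
  assumes pd: "\<And>i. i \<ge> 1 \<Longrightarrow> pluri_diamond (umin i) (umax i)"
    and third: "\<And>i. i \<ge> 1 \<Longrightarrow> umin i (1/3) = 0 \<and> umax i (1/3) = 0"
    and diam: "\<And>i c d. i \<ge> 1 \<Longrightarrow> (c, d) \<in> removed_intervals i \<Longrightarrow>
                 is_diamond (umin i) (umax i) c d"
    and line: "\<And>i c d. i \<ge> 1 \<Longrightarrow> (c, d) \<in> cantor_intervals i \<Longrightarrow>
                 is_double_line (umin i) (umax i) c d"
    and sub: "strict_mono r"
    and lim_min: "uniform_limit {0..1} (\<lambda>k. umin (r k)) vmin sequentially"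
    and lim_max: "uniform_limit {0..1} (\<lambda>k. umax (r k)) vmax sequentially"
  shows "dir_quasiminimizer 4 vmin vmax \<and> branch_set vmin vmax = cantor_set"
proof -
  interpret cantor_pluri_diamond_limit umin umax r vmin vmax
  proof
    show "continuous_on {0..1} (umin i) \<and> continuous_on {0..1} (umax i)" if "i \<ge> 1" for i
      using pd[OF that] unfolding pluri_diamond_def by blast
    show "filterlim r at_top sequentially"
      using filterlim_subseq[OF sub] by simp
    show "(\<lambda>k. umin (r k) x) \<longlonglongrightarrow> vmin x" "(\<lambda>k. umax (r k) x) \<longlonglongrightarrow> vmax x" if "x \<in> {0..1}" for x
      using tendsto_uniform_limitI[OF lim_min that] tendsto_uniform_limitI[OF lim_max that] .
  qed (use diam line in auto)
  have "dir_quasiminimizer 4 vmin vmax"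
    by (intro dir_quasiminimizer_of_removed_diamonds limit_is_diamond limit_trace_mono)
  moreover have "branch_set vmin vmax = cantor_set"
    by (intro branch_set_eq_cantor_set limit_is_diamond limit_collapses_on_cantor_set)
  ultimately show ?thesis ..
qed

end
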